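(* Let $l\le k$ be non-negative integers. Then $S(k,k,l)=\binom{k}{l}^2$.
   Context: A Dyck path of semilength $k$ (Dyck $k$-path) is a lattice path in $\mathbb{Z}^2$ starting at $(0,0)$, ending at $(2k,0)$, never going below the $x$-axis, each of whose $2k$ steps is either a rise $(1,1)$ or a fall $(1,-1)$. For a Dyck $k$-path $D$ and non-negative integers $l\le m\le 2k$, $S(D,m,l)$ denotes the number of intervals of length $m$ in $D$ (i.e. blocks of $m$ consecutive steps of $D$, one for each starting position $s\in\{1,\dots,2k-m+1\}$) that contain exactly $l$ falls; and $S(k,m,l)=\sum_{D} S(D,m,l)$, the sum over all Dyck $k$-paths $D$. *)

theory Defs
  imports Main
begin

text \<open>A path is a list of steps: True = rise (1,1), False = fall (1,-1).\<close>

definition falls :: "bool list \<Rightarrow> nat" where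
  "falls xs = length (filter Not xs)"

definition rises :: "bool list \<Rightarrow> nat" where
  "rises xs = length (filter id xs)"

definition dyck_paths :: "nat \<Rightarrow> bool list set" where
  "dyck_paths k = {D. length D = 2 * k \<and> rises D = falls D \<and>
      (\<forall>i \<le> length D. falls (take i D) \<le> rises (take i D))}"

text \<open>S(D,m,l): number of starting positions s (1-based s in 1..2k-m+1; here 0-based
  s with s + m \<le> length D) such that the block of m consecutive steps starting
  at s contains exactly l falls.\<close>
definition S_path :: "bool list \<Rightarrow> nat \<Rightarrow> nat \<Rightarrow> nat" where
  "S_path D m l = card {s. s + m \<le> length D \<and> falls (take m (drop s D)) = l}"

definition S_total :: "nat \<Rightarrow> nat \<Rightarrow> nat \<Rightarrow> nat" where
  "S_total k m l = (\<Sum>D\<in>dyck_paths k. S_path D m l)"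

end

theory Submission
  imports Defs
begin

(* Prepending a rise to a Dyck path of semilength k gives a word of length 2k+1 with k falls, and
   by the cycle lemma every such word arises from exactly one path and exactly one of the 2k+1
   rotations. A length-m window of such a rotation either lies inside the path, or it contains the
   prepended rise and its complement is a window of length 2k+1-m of the path carrying the remaining
   falls. Counting the words whose first m letters contain l falls therefore gives
     S(k,m,l) + S(k,2k+1-m,k-l) = C(m,l) C(2k+1-m,k-l).
   For m = k, the reflection symmetry S(k,m,l) = S(k,m,m-l) and S(k,k+1,k+1) = 0 turn these
   relations into a recursion in l whose solution is S(k,k,l) = C(k,l)^2. *)

lemma falls_Nil [simp]: "falls [] = 0"
  by (simp add: falls_def)

lemma rises_Nil [simp]: "rises [] = 0"
  by (simp add: rises_def)

lemma falls_Cons [simp]: "falls (x # xs) = (if x then falls xs else Suc (falls xs))"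
  by (simp add: falls_def)

lemma rises_Cons [simp]: "rises (x # xs) = (if x then Suc (rises xs) else rises xs)"
  by (simp add: rises_def)

lemma falls_append [simp]: "falls (xs @ ys) = falls xs + falls ys"
  by (simp add: falls_def)

lemma rises_append [simp]: "rises (xs @ ys) = rises xs + rises ys"
  by (simp add: rises_def)

lemma rises_add_falls: "rises xs + falls xs = length xs"
  by (induction xs) auto

lemma falls_take_add_drop: "falls (take i xs) + falls (drop i xs) = falls xs"
  by (metis append_take_drop_id falls_append)

lemma rises_take_add_drop: "rises (take i xs) + rises (drop i xs) = rises xs"
  by (metis append_take_drop_id rises_append)

lemma falls_take_le: "falls (take i xs) \<le> falls xs"
  using falls_take_add_drop le_add1 by metis

lemma falls_rotate [simp]: "falls (rotate r xs) = falls xs"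
  by (metis falls_take_add_drop falls_append add.commute rotate_drop_take)

lemma card_lists_falls: "card {xs. length xs = n \<and> falls xs = f} = n choose f"
proof (induction n arbitrary: f)
  case 0
  then show ?case
    by (cases f) (auto simp: Collect_conv_if)
next
  case (Suc n)
  have fin: "finite {xs :: bool list. length xs = n \<and> P xs}" for P
    by (rule finite_subset[OF _ finite_lists_length_eq[of UNIV n]]) auto
  show ?case
  proof (cases f)
    case 0
    have "{xs. length xs = Suc n \<and> falls xs = f} = Cons True ` {xs. length xs = n \<and> falls xs = 0}"
      using 0 by (auto simp: length_Suc_conv split: if_splits)
    then show ?thesis
      using Suc.IH[of 0] 0 by (simp add: card_image)
  next
    case (Suc f')
    have "{xs. length xs = Suc n \<and> falls xs = f} =
        Cons True ` {xs. length xs = n \<and> falls xs = f} \<union> Cons False ` {xs. length xs = n \<and> falls xs = f'}"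
      using Suc by (auto simp: length_Suc_conv split: if_splits)
    also have "card \<dots> = card {xs. length xs = n \<and> falls xs = f} + card {xs. length xs = n \<and> falls xs = f'}"
      by (subst card_Un_disjoint) (auto simp: card_image fin)
    finally show ?thesis
      using Suc.IH[of f] Suc.IH[of f'] Suc by simp
  qed
qed


lemma card_lists_falls_prefix:
  assumes "l \<le> f"
  shows "card {xs. length xs = a + b \<and> falls xs = f \<and> falls (take a xs) = l}
    = (a choose l) * (b choose (f - l))"
proof -
  let ?A = "{xs. length xs = a \<and> falls xs = l}" and ?B = "{xs. length xs = b \<and> falls xs = f - l}"
  have "{xs. length xs = a + b \<and> falls xs = f \<and> falls (take a xs) = l}
      = (\<lambda>p. fst p @ snd p) ` (?A \<times> ?B)"
  proof (intro equalityI subsetI)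
    fix xs assume "xs \<in> {xs. length xs = a + b \<and> falls xs = f \<and> falls (take a xs) = l}"
    then have "(take a xs, drop a xs) \<in> ?A \<times> ?B"
      using falls_take_add_drop[of a xs] by auto
    moreover have "xs = (\<lambda>p. fst p @ snd p) (take a xs, drop a xs)"
      by simp
    ultimately show "xs \<in> (\<lambda>p. fst p @ snd p) ` (?A \<times> ?B)"
      by blast
  next
    fix xs assume "xs \<in> (\<lambda>p. fst p @ snd p) ` (?A \<times> ?B)"
    then obtain u v where "u \<in> ?A" "v \<in> ?B" "xs = u @ v"
      by auto
    then show "xs \<in> {xs. length xs = a + b \<and> falls xs = f \<and> falls (take a xs) = l}"
      using assms by simp
  qed
  moreover have "inj_on (\<lambda>p. fst p @ snd p) (?A \<times> ?B)"
  proof (rule inj_onI)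
    fix p q assume "p \<in> ?A \<times> ?B" "q \<in> ?A \<times> ?B" "fst p @ snd p = fst q @ snd q"
    then show "p = q"
      by (simp add: append_eq_append_conv mem_Times_iff prod_eq_iff)
  qed
  ultimately show ?thesis
    by (simp add: card_image card_cartesian_product card_lists_falls)
qed

lemma dyck_pathsD:
  assumes "D \<in> dyck_paths k"
  shows "length D = 2 * k" "rises D = falls D" "falls D = k"
  using assms rises_add_falls[of D] by (auto simp: dyck_paths_def)

lemma finite_dyck_paths: "finite (dyck_paths k)"
  by (rule finite_subset[OF _ finite_lists_length_eq[of UNIV "2 * k"]]) (auto simp: dyck_paths_def)

lemma S_path_eq_0_if_falls_less:
  assumes "falls D < l"
  shows "S_path D m l = 0"
proof -
  have "falls (take m (drop s D)) \<le> falls D" for s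
    by (metis falls_take_le falls_take_add_drop le_add2 order_trans)
  then have "{s. s + m \<le> length D \<and> falls (take m (drop s D)) = l} = {}"
    using assms by (metis (mono_tags, lifting) Collect_empty_eq not_le)
  then show ?thesis
    unfolding S_path_def by (simp only: card.empty)
qed

lemma S_total_eq_0_if_less: "k < l \<Longrightarrow> S_total k m l = 0"
  by (simp add: S_total_def S_path_eq_0_if_falls_less dyck_pathsD(3))

section \<open>Reflection symmetry\<close>

definition reflect :: "bool list \<Rightarrow> bool list" where
  "reflect xs = map Not (rev xs)"

lemma falls_reflect [simp]: "falls (reflect xs) = rises xs"
  unfolding reflect_def by (induction xs) auto

lemma rises_reflect [simp]: "rises (reflect xs) = falls xs"
  unfolding reflect_def by (induction xs) auto

lemma length_reflect [simp]: "length (reflect xs) = length xs"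
  by (simp add: reflect_def)

lemma reflect_reflect [simp]: "reflect (reflect xs) = xs"
  by (simp add: reflect_def rev_map comp_def)

lemma take_drop_reflect:
  assumes "s + m \<le> length xs"
  shows "take m (drop s (reflect xs)) = reflect (take m (drop (length xs - s - m) xs))"
  using assms by (simp add: reflect_def take_map drop_map take_rev drop_rev drop_take)

lemma reflect_dyck_paths:
  assumes D: "D \<in> dyck_paths k"
  shows "reflect D \<in> dyck_paths k"
  unfolding dyck_paths_def
proof (intro CollectI conjI allI impI)
  show "length (reflect D) = 2 * k" "rises (reflect D) = falls (reflect D)"
    using dyck_pathsD[OF D] by simp_all
  fix i assume "i \<le> length (reflect D)"
  let ?j = "length D - i"
  have "falls (take ?j D) \<le> rises (take ?j D)"
    using D by (auto simp: dyck_paths_def)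
  then have "rises (drop ?j D) \<le> falls (drop ?j D)"
    using dyck_pathsD(2)[OF D] falls_take_add_drop[of ?j D] rises_take_add_drop[of ?j D] by linarith
  then show "falls (take i (reflect D)) \<le> rises (take i (reflect D))"
    using take_drop_reflect[of 0 i D] \<open>i \<le> length (reflect D)\<close> by simp
qed

lemma bij_betw_reflect_dyck_paths: "bij_betw reflect (dyck_paths k) (dyck_paths k)"
  by (rule bij_betw_byWitness[of _ reflect]) (auto simp: reflect_dyck_paths)

lemma S_path_reflect:
  assumes "l \<le> m"
  shows "S_path (reflect D) m l = S_path D m (m - l)"
proof -
  let ?n = "length D"
  let ?S = "\<lambda>D l. {s. s + m \<le> length D \<and> falls (take m (drop s D)) = l}"
  have window: "falls (take m (drop (?n - s - m) D)) = m - l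
      \<longleftrightarrow> rises (take m (drop (?n - s - m) D)) = l"
    if "s + m \<le> ?n" for s
    using that assms rises_add_falls[of "take m (drop (?n - s - m) D)"] by auto
  have "?S (reflect D) l = (\<lambda>s. ?n - s - m) ` ?S D (m - l)"
  proof (intro equalityI subsetI)
    fix s assume "s \<in> ?S (reflect D) l"
    then have "?n - s - m \<in> ?S D (m - l)" "s = ?n - (?n - s - m) - m"
      using window[of s] by (auto simp: take_drop_reflect)
    then show "s \<in> (\<lambda>s. ?n - s - m) ` ?S D (m - l)"
      by blast
  next
    fix s assume "s \<in> (\<lambda>s. ?n - s - m) ` ?S D (m - l)"
    then obtain t where t: "t \<in> ?S D (m - l)" "s = ?n - t - m"
      by blast
    then have "?n - s - m = t"
      by auto
    with t show "s \<in> ?S (reflect D) l"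
      using window[of s] by (auto simp: take_drop_reflect)
  qed
  moreover have "inj_on (\<lambda>s. ?n - s - m) (?S D (m - l))"
    by (rule inj_onI) auto
  ultimately show ?thesis
    by (simp add: S_path_def card_image)
qed

lemma S_total_symmetric:
  assumes "l \<le> m"
  shows "S_total k m l = S_total k m (m - l)"
proof -
  have "S_total k m l = (\<Sum>D\<in>dyck_paths k. S_path (reflect D) m l)"
    unfolding S_total_def by (rule sum.reindex_bij_betw[OF bij_betw_reflect_dyck_paths, symmetric])
  also have "\<dots> = S_total k m (m - l)"
    by (simp add: S_total_def S_path_reflect[OF assms])
  finally show ?thesis .
qed

section \<open>The cycle lemma\<close>

definition strictly_positive :: "bool list \<Rightarrow> bool" where
  "strictly_positive P \<longleftrightarrow> (\<forall>i \<in> {1..length P}. falls (take i P) < rises (take i P))"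

lemma strictly_positive_ConsD: "strictly_positive (b # D) \<Longrightarrow> b"
  unfolding strictly_positive_def by (drule bspec[where x = 1]) (auto split: if_splits)

lemma dyck_paths_iff_strictly_positive:
  "D \<in> dyck_paths k \<longleftrightarrow> length D = 2 * k \<and> falls D = k \<and> strictly_positive (True # D)"
proof -
  have "(\<forall>i \<le> length D. falls (take i D) \<le> rises (take i D)) \<longleftrightarrow> strictly_positive (True # D)"
    unfolding strictly_positive_def by (auto simp: Ball_def less_Suc_eq_le take_Cons' split: if_splits)
  then show ?thesis
    using rises_add_falls[of D] unfolding dyck_paths_def by auto
qed

lemma strictly_positive_rotate_unique:
  assumes P: "strictly_positive P" and rot: "strictly_positive (rotate q P)"
    and height: "rises P = Suc (falls P)"
  shows "q mod length P = 0"
proof (rule ccontr)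
  let ?q = "q mod length P"
  assume "?q \<noteq> 0"
  moreover have "P \<noteq> []"
    using height by auto
  ultimately have q: "0 < ?q" "?q < length P"
    by simp_all
  have "take (length P - ?q) (rotate q P) = drop ?q P"
    by (simp add: rotate_drop_take)
  then have "falls (drop ?q P) < rises (drop ?q P)"
    using rot q unfolding strictly_positive_def by (metis atLeastAtMost_iff diff_le_self
        length_rotate less_one not_le zero_less_diff)
  moreover have "falls (take ?q P) < rises (take ?q P)"
    using P q unfolding strictly_positive_def by auto
  ultimately show False
    using height falls_take_add_drop[of ?q P] rises_take_add_drop[of ?q P] by linarith
qed

definition height :: "bool list \<Rightarrow> int" where
  "height xs = int (rises xs) - int (falls xs)"

lemma height_append [simp]: "height (xs @ ys) = height xs + height ys"
  by (simp add: height_def)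

lemma strictly_positive_rotate_last_minimum:
  assumes "height X = 1" "q < length X"
    and min: "\<And>i. i < length X \<Longrightarrow> height (take q X) \<le> height (take i X)"
    and last: "\<And>i. q < i \<Longrightarrow> i < length X \<Longrightarrow> height (take q X) < height (take i X)"
  shows "strictly_positive (rotate q X)"
proof -
  let ?N = "length X" and ?M = "height (take q X)"
  have rot: "rotate q X = drop q X @ take q X"
    using assms(2) by (simp add: rotate_drop_take)
  have shift: "height (take (q + j) X) = ?M + height (take j (drop q X))" for j
    by (simp add: take_add)
  have "height (take j (rotate q X)) > 0" if "1 \<le> j" "j \<le> ?N" for j
  proof (cases "q + j \<le> ?N")
    case True
    have "height (take (q + j) X) > ?M"
    proof (cases "q + j = ?N")
      case True
      have "?M \<le> height (take 0 X)"
        using assms(2) by (intro min) auto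
      with True show ?thesis
        using assms(1) by (simp add: height_def)
    next
      case False
      then show ?thesis
        using last \<open>q + j \<le> ?N\<close> \<open>1 \<le> j\<close> by simp
    qed
    moreover have "take j (rotate q X) = take j (drop q X)"
      using rot True by simp
    ultimately show ?thesis
      using shift[of j] by simp
  next
    case False
    let ?j = "j - (?N - q)"
    have "take j (rotate q X) = drop q X @ take ?j X"
      using rot False assms(2) \<open>j \<le> ?N\<close> by (auto simp: min_def)
    moreover have "height (drop q X) = 1 - ?M"
      using shift[of "?N - q"] assms(1,2) by simp
    moreover have "height (take ?j X) \<ge> ?M"
      using min assms(2) \<open>j \<le> ?N\<close> by simp
    ultimately show ?thesis
      by simp
  qed
  then show ?thesis
    by (simp add: strictly_positive_def height_def)
qed

lemma strictly_positive_rotate_exists: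
  assumes "rises X = Suc (falls X)"
  obtains q where "q < length X" "strictly_positive (rotate q X)"
proof -
  let ?N = "length X" and ?H = "\<lambda>i. height (take i X)"
  have "height X = 1" "?N > 0"
    using assms by (auto simp: height_def)
  define M where "M = Min (?H ` {..<?N})"
  have M_le: "M \<le> ?H i" if "i < ?N" for i
    using that by (simp add: M_def)
  have "M \<in> ?H ` {..<?N}"
    unfolding M_def using \<open>?N > 0\<close> by (intro Min_in) auto
  then have "{i. i < ?N \<and> ?H i = M} \<noteq> {}"
    by auto
  define q where "q = Max {i. i < ?N \<and> ?H i = M}"
  have "q \<in> {i. i < ?N \<and> ?H i = M}"
    unfolding q_def using \<open>{i. i < ?N \<and> ?H i = M} \<noteq> {}\<close> by (intro Max_in) auto
  moreover have "?H i > M" if "q < i" "i < ?N" for i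
    using that M_le[of i] Max_ge[of "{i. i < ?N \<and> ?H i = M}" i] unfolding q_def[symmetric]
    by fastforce
  ultimately have "strictly_positive (rotate q X)"
    using M_le \<open>height X = 1\<close> by (intro strictly_positive_rotate_last_minimum) auto
  with \<open>q \<in> {i. i < ?N \<and> ?H i = M}\<close> show thesis
    using that by blast
qed

lemma inj_on_rotate_Cons_True:
  "inj_on (\<lambda>(D, r). rotate r (True # D)) (dyck_paths k \<times> {..<Suc (2 * k)})"
proof (rule inj_onI, clarify)
  let ?N = "Suc (2 * k)"
  fix D r D' r'
  assume D: "D \<in> dyck_paths k" "r < ?N" and D': "D' \<in> dyck_paths k" "r' < ?N"
    and eq: "rotate r (True # D) = rotate r' (True # D')"
  have len: "length (True # D) = ?N" "length (True # D') = ?N"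
    using D(1) D'(1) by (simp_all add: dyck_pathsD)
  have "True # D' = rotate (?N - r' + r') (True # D')"
    using len(2) D'(2) by (simp del: rotate_Suc)
  also have "\<dots> = rotate (?N - r') (rotate r (True # D))"
    by (simp only: eq flip: rotate_rotate)
  also have "\<dots> = rotate (r + (?N - r')) (True # D)"
    by (simp only: rotate_rotate add.commute)
  finally have rot: "True # D' = rotate (r + (?N - r')) (True # D)" .
  have "(r + (?N - r')) mod ?N = 0"
    using strictly_positive_rotate_unique[of "True # D" "r + (?N - r')"] rot D(1) D'(1) len
      dyck_pathsD[OF D(1)]
    by (simp add: dyck_paths_iff_strictly_positive)
  then have "r = r'"
    using D(2) D'(2) by (auto simp: mod_if split: if_splits)
  moreover have "rotate (r + (?N - r')) (True # D) = True # D"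
    using \<open>(r + (?N - r')) mod ?N = 0\<close> len(1) by (intro rotate_id) simp
  ultimately show "D = D' \<and> r = r'"
    using rot by simp
qed

lemma rotation_of_Cons_True_dyck_path:
  assumes "length X = Suc (2 * k)" "falls X = k"
  obtains D r where "D \<in> dyck_paths k" "r < Suc (2 * k)" "X = rotate r (True # D)"
proof -
  let ?N = "Suc (2 * k)"
  obtain q where q: "q < length X" "strictly_positive (rotate q X)"
    using strictly_positive_rotate_exists[of X] rises_add_falls[of X] assms by auto
  moreover obtain b D where "rotate q X = b # D"
    using assms by (cases "rotate q X") auto
  ultimately have rot: "rotate q X = True # D"
    using strictly_positive_ConsD by auto
  moreover have "length (True # D) = length X" "falls (True # D) = falls X"
    by (simp_all flip: rot)
  ultimately have "D \<in> dyck_paths k"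
    using assms q(2) by (simp add: dyck_paths_iff_strictly_positive)
  have "rotate (?N - q) (True # D) = rotate (?N - q + q) X"
    by (simp only: rot flip: rotate_rotate)
  also have "\<dots> = X"
    using assms q(1) by (intro rotate_id) simp
  finally have "X = rotate (?N - q) (True # D)" ..
  also have "\<dots> = rotate ((?N - q) mod ?N) (True # D)"
    using \<open>D \<in> dyck_paths k\<close> by (metis dyck_pathsD(1) length_Cons rotate_conv_mod)
  finally show thesis
    using that \<open>D \<in> dyck_paths k\<close> by (metis mod_less_divisor zero_less_Suc)
qed

lemma bij_betw_rotate_Cons_True:
  "bij_betw (\<lambda>(D, r). rotate r (True # D)) (dyck_paths k \<times> {..<Suc (2 * k)})
     {X. length X = Suc (2 * k) \<and> falls X = k}"
proof (rule bij_betw_imageI[OF inj_on_rotate_Cons_True], intro equalityI subsetI)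
  fix X assume "X \<in> (\<lambda>(D, r). rotate r (True # D)) ` (dyck_paths k \<times> {..<Suc (2 * k)})"
  then show "X \<in> {X. length X = Suc (2 * k) \<and> falls X = k}"
    by (auto simp: dyck_pathsD)
next
  fix X assume "X \<in> {X. length X = Suc (2 * k) \<and> falls X = k}"
  then obtain D r where "D \<in> dyck_paths k" "r < Suc (2 * k)" "X = rotate r (True # D)"
    using rotation_of_Cons_True_dyck_path by blast
  then show "X \<in> (\<lambda>(D, r). rotate r (True # D)) ` (dyck_paths k \<times> {..<Suc (2 * k)})"
    by force
qed

lemma card_words_eq_sum_rotations:
  "card {X. length X = Suc (2 * k) \<and> falls X = k \<and> P X}
    = (\<Sum>D\<in>dyck_paths k. card {r. r < Suc (2 * k) \<and> P (rotate r (True # D))})"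
proof -
  let ?f = "\<lambda>(D, r). rotate r (True # D)"
  have "bij_betw ?f {p \<in> dyck_paths k \<times> {..<Suc (2 * k)}. P (?f p)}
      {X \<in> {X. length X = Suc (2 * k) \<and> falls X = k}. P X}"
    by (rule bij_betw_Collect[OF bij_betw_rotate_Cons_True]) simp
  then have "card {X. length X = Suc (2 * k) \<and> falls X = k \<and> P X}
      = card {p \<in> dyck_paths k \<times> {..<Suc (2 * k)}. P (?f p)}"
    by (simp add: bij_betw_same_card)
  also have "card {p \<in> dyck_paths k \<times> {..<Suc (2 * k)}. P (?f p)}
      = card (SIGMA D:dyck_paths k. {r. r < Suc (2 * k) \<and> P (rotate r (True # D))})"
    by (rule arg_cong[where f = card]) auto
  also have "\<dots> = (\<Sum>D\<in>dyck_paths k. card {r. r < Suc (2 * k) \<and> P (rotate r (True # D))})"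
    by (simp add: finite_dyck_paths)
  finally show ?thesis .
qed

lemma take_rotate_Cons:
  assumes "1 \<le> r" "r + m \<le> Suc (length D)"
  shows "take m (rotate r (x # D)) = take m (drop (r - 1) D)"
proof (cases "r + m = Suc (length D) \<and> m = 0")
  case False
  then have "r < length (x # D)"
    using assms by auto
  then show ?thesis
    using assms by (simp add: rotate_drop_take drop_Cons')
qed simp

lemma card_rotations_interior:
  "card {r. 1 \<le> r \<and> r + m \<le> Suc (length D) \<and> falls (take m (rotate r (x # D))) = l} = S_path D m l"
proof -
  have "{r. 1 \<le> r \<and> r + m \<le> Suc (length D) \<and> falls (take m (rotate r (x # D))) = l}
      = Suc ` {s. s + m \<le> length D \<and> falls (take m (drop s D)) = l}"
    by (auto simp: take_rotate_Cons image_iff Suc_le_eq gr0_conv_Suc simp del: rotate_Suc)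
  then show ?thesis
    by (simp add: S_path_def card_image)
qed

lemma falls_take_rotate_complement:
  assumes "m \<le> length xs"
  shows "falls (take m (rotate r xs)) + falls (take (length xs - m) (rotate (r + m) xs)) = falls xs"
proof -
  let ?ys = "rotate r xs"
  have "take (length xs - m) (rotate (r + m) xs) = drop m ?ys"
  proof (cases "m = length xs")
    case False
    have rotate_split: "rotate m ys = drop m ys @ take m ys" if "m < length ys" for ys :: "'a list"
      using that by (simp add: rotate_drop_take)
    have "rotate m ?ys = drop m ?ys @ take m ?ys"
      using assms False by (intro rotate_split) simp
    then show ?thesis
      by (simp add: rotate_rotate add.commute)
  qed simp
  then show ?thesis
    using falls_take_add_drop[of m ?ys] by simp
qed

lemma card_rotations_wrapping:
  assumes m: "1 \<le> m" "m \<le> length D" and l: "l \<le> falls D"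
  shows "card {r. r < Suc (length D) \<and> \<not> (1 \<le> r \<and> r + m \<le> Suc (length D))
      \<and> falls (take m (rotate r (True # D))) = l}
    = S_path D (Suc (length D) - m) (falls D - l)"
proof -
  let ?N = "Suc (length D)" and ?w = "True # D"
  define A where "A = {r. r < ?N \<and> \<not> (1 \<le> r \<and> r + m \<le> ?N)}"
  define B where "B = {r. 1 \<le> r \<and> r + (?N - m) \<le> ?N}"
  \<comment> \<open>\<open>g r = (r + m) mod N\<close>: the complementary window starts where the window at \<open>r\<close> ends\<close>
  define g where "g r = (if r = 0 then m else r + m - ?N)" for r
  have "bij_betw g A B"
    by (rule bij_betw_byWitness[where f' = "\<lambda>r. if r = m then 0 else r + ?N - m"])
      (use m in \<open>auto simp: A_def B_def g_def\<close>)
  moreover have "falls (take (?N - m) (rotate (g r) ?w)) = falls D - l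
      \<longleftrightarrow> falls (take m (rotate r ?w)) = l" if "r \<in> A" for r
  proof -
    have "rotate (r + m) ?w = rotate (g r) ?w"
    proof (cases "r = 0")
      case False
      then have "r + m = g r + length ?w"
        using that by (auto simp: A_def g_def)
      then show ?thesis
        by (simp only: flip: rotate_rotate) (simp del: rotate_Suc)
    qed (simp add: g_def)
    then show ?thesis
      using falls_take_rotate_complement[of m ?w r] m l by auto
  qed
  ultimately have "bij_betw g {r \<in> A. falls (take m (rotate r ?w)) = l}
      {r \<in> B. falls (take (?N - m) (rotate r ?w)) = falls D - l}"
    by (rule bij_betw_Collect)
  then show ?thesis
    using card_rotations_interior[of "?N - m" D True "falls D - l"]
    by (simp add: bij_betw_same_card A_def B_def conj_assoc)
qed

lemma card_rotations_falls_take: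
  assumes "1 \<le> m" "m \<le> length D" "l \<le> falls D"
  shows "card {r. r < Suc (length D) \<and> falls (take m (rotate r (True # D))) = l}
    = S_path D m l + S_path D (Suc (length D) - m) (falls D - l)"
proof -
  let ?N = "Suc (length D)" and ?c = "\<lambda>r. falls (take m (rotate r (True # D))) = l"
  let ?I = "{r. 1 \<le> r \<and> r + m \<le> ?N \<and> ?c r}"
  let ?A = "{r. r < ?N \<and> \<not> (1 \<le> r \<and> r + m \<le> ?N) \<and> ?c r}"
  have "{r. r < ?N \<and> ?c r} = ?I \<union> ?A"
    using assms by auto
  moreover have "finite ?I" "finite ?A"
    by (auto intro: finite_subset[of _ "{..?N}"])
  ultimately have "card {r. r < ?N \<and> ?c r} = card ?I + card ?A"
    by (simp only:) (rule card_Un_disjoint, auto)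
  then show ?thesis
    using card_rotations_interior[of m D True l] card_rotations_wrapping[OF assms] by simp
qed

section \<open>The window identity\<close>

lemma S_total_complementary_windows:
  assumes "1 \<le> m" "m \<le> 2 * k" "l \<le> k"
  shows "S_total k m l + S_total k (Suc (2 * k) - m) (k - l)
    = (m choose l) * (Suc (2 * k) - m choose (k - l))"
proof -
  have "(m choose l) * (Suc (2 * k) - m choose (k - l))
      = card {X. length X = Suc (2 * k) \<and> falls X = k \<and> falls (take m X) = l}"
    using card_lists_falls_prefix[OF assms(3), of m "Suc (2 * k) - m"] assms(2) by simp
  also have "\<dots> = (\<Sum>D\<in>dyck_paths k.
      card {r. r < Suc (2 * k) \<and> falls (take m (rotate r (True # D))) = l})"
    by (rule card_words_eq_sum_rotations)
  also have "\<dots> = (\<Sum>D\<in>dyck_paths k. S_path D m l + S_path D (Suc (2 * k) - m) (k - l))"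
  proof (rule sum.cong)
    fix D assume "D \<in> dyck_paths k"
    then show "card {r. r < Suc (2 * k) \<and> falls (take m (rotate r (True # D))) = l}
        = S_path D m l + S_path D (Suc (2 * k) - m) (k - l)"
      using card_rotations_falls_take[of m D l] dyck_pathsD[of D k] assms by simp
  qed simp
  also have "\<dots> = S_total k m l + S_total k (Suc (2 * k) - m) (k - l)"
    by (simp add: S_total_def sum.distrib)
  finally show ?thesis ..
qed

lemma S_total_half_windows:
  assumes "1 \<le> k" "i \<le> k"
  shows "S_total k k i + S_total k (Suc k) i = (k choose i) * (Suc k choose i)"
    and "S_total k k i + S_total k (Suc k) (Suc i) = (k choose i) * (Suc k choose Suc i)"
proof -
  have window: "S_total k k j + S_total k (Suc k) (k - j) = (k choose j) * (Suc k choose (k - j))"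
    if "j \<le> k" for j
    using S_total_complementary_windows[of k k j] assms(1) that by (simp add: Suc_diff_le)
  show "S_total k k i + S_total k (Suc k) i = (k choose i) * (Suc k choose i)"
    using window[of "k - i"] assms(2) S_total_symmetric[of "k - i" k k]
    by (simp add: binomial_symmetric[of i k, symmetric])
  show "S_total k k i + S_total k (Suc k) (Suc i) = (k choose i) * (Suc k choose Suc i)"
    using window[of i] assms(2) S_total_symmetric[of "k - i" "Suc k" k]
      binomial_symmetric[of "Suc i" "Suc k"]
    by (simp add: Suc_diff_le del: binomial_Suc_Suc)
qed

lemma binomial_square_unique_solution:
  fixes x y :: "nat \<Rightarrow> nat"
  assumes lower: "\<And>i. i \<le> k \<Longrightarrow> x i + y i = (k choose i) * (Suc k choose i)"
    and upper: "\<And>i. i \<le> k \<Longrightarrow> x i + y (Suc i) = (k choose i) * (Suc k choose Suc i)"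
    and "y 0 = 0" "i \<le> k"
  shows "x i = (k choose i)\<^sup>2"
  using \<open>i \<le> k\<close>
proof (induction i)
  case 0
  then show ?case
    using lower[of 0] \<open>y 0 = 0\<close> by simp
next
  case (Suc i)
  then have "x i + y (Suc i) = (k choose i) * ((k choose i) + (k choose Suc i))"
    using upper[of i] by simp
  then have "y (Suc i) = (k choose i) * (k choose Suc i)"
    using Suc by (simp add: power2_eq_square algebra_simps)
  then show ?case
    using lower[of "Suc i"] Suc.prems by (simp add: power2_eq_square algebra_simps)
qed

theorem corollary2:
  fixes k l :: nat
  assumes "l \<le> k"
  shows "S_total k k l = (k choose l)^2"
proof (cases "k = 0")
  case True
  then have "dyck_paths k = {[]}"
    by (auto simp: dyck_paths_def)
  then show ?thesis
    using True assms by (simp add: S_total_def S_path_def)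
next
  case False
  have "S_total k (Suc k) 0 = 0"
    using S_total_symmetric[of "Suc k" "Suc k" k] S_total_eq_0_if_less[of k "Suc k"] by simp
  then show ?thesis
    using binomial_square_unique_solution[of k "S_total k k" "S_total k (Suc k)" l]
      S_total_half_windows False assms by simp
qed

end
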